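(* Every search game (as defined in the context) admits a pure (Bayesian) Nash equilibrium.
   Context: A search game $G=(N,\Omega,\Pi,\mu,K,c,v)$ consists of: a finite set of players $N=\{1,\ldots,n\}$; a finite set $\Omega$ of locations; for each player $i$ a partition $\Pi_i$ of $\Omega$, with $\pi_i(\omega)$ the cell containing $\omega$; a common prior $\mu\in\Delta(\Omega)$ with $\mu(\pi_i)>0$ for every cell of every player; capacities $K_i\in\mathbb{N}$; costs $c_i:\{0,\ldots,K_i\}\to\mathbb{R}_{\ge0}$ with $c_i(0)=0$ and nondecreasing increments $c_i(k+1)-c_i(k)\ge c_i(k)-c_i(k-1)$; rewards $v_i^m(\omega)\ge0$ weakly decreasing in $m$; social values $v_{\mathfrak{s}}(\omega)\ge0$. A pure strategy $s_i$ assigns to each cell $\pi_i$ a subset $s_i(\pi_i)\subseteq\pi_i$ of size at most $K_i$. With $m_s(\omega)=\sum_{i}\mathbf{1}_{\omega\in s_i(\pi_i(\omega))}$, player $i$'s payoff is $u_i(s)=\sum_{\omega}\mu(\omega)\big[\mathbf{1}_{\omega\in s_i(\pi_i(\omega))}v_i^{m_s(\omega)}(\omega)-c_i(|s_i(\pi_i(\omega))|)\big]$. A pure Nash equilibrium is a pure profile $s$ with $u_i(s)\ge u_i(s_i',s_{-i})$ for all $i$ and all pure $s_i'$. *)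

theory Defs
  imports Complex_Main "HOL-Library.Disjoint_Sets"
begin

definition cell :: "('p \<Rightarrow> 'w set set) \<Rightarrow> 'p \<Rightarrow> 'w \<Rightarrow> 'w set" where
  "cell Part i w = (THE C. C \<in> Part i \<and> w \<in> C)"

definition pure_strategy ::
  "('p \<Rightarrow> 'w set set) \<Rightarrow> ('p \<Rightarrow> nat) \<Rightarrow> 'p \<Rightarrow> ('w set \<Rightarrow> 'w set) \<Rightarrow> bool" where
  "pure_strategy Part K i si \<longleftrightarrow> (\<forall>C\<in>Part i. si C \<subseteq> C \<and> card (si C) \<le> K i)"

definition searchers ::
  "('p::finite \<Rightarrow> 'w set set) \<Rightarrow> ('p \<Rightarrow> 'w set \<Rightarrow> 'w set) \<Rightarrow> 'w \<Rightarrow> nat" where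
  "searchers Part s w = card {i. w \<in> s i (cell Part i w)}"

definition payoff ::
  "('p::finite \<Rightarrow> 'w::finite set set) \<Rightarrow> ('w \<Rightarrow> real) \<Rightarrow> ('p \<Rightarrow> nat \<Rightarrow> real)
   \<Rightarrow> ('p \<Rightarrow> nat \<Rightarrow> 'w \<Rightarrow> real) \<Rightarrow> 'p \<Rightarrow> ('p \<Rightarrow> 'w set \<Rightarrow> 'w set) \<Rightarrow> real" where
  "payoff Part \<mu> c v i s =
     (\<Sum>w\<in>UNIV. \<mu> w * ((if w \<in> s i (cell Part i w) then v i (searchers Part s w) w else 0)
                         - c i (card (s i (cell Part i w)))))"

definition pure_nash ::
  "('p::finite \<Rightarrow> 'w::finite set set) \<Rightarrow> ('w \<Rightarrow> real) \<Rightarrow> ('p \<Rightarrow> nat) \<Rightarrow> ('p \<Rightarrow> nat \<Rightarrow> real)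
   \<Rightarrow> ('p \<Rightarrow> nat \<Rightarrow> 'w \<Rightarrow> real) \<Rightarrow> ('p \<Rightarrow> 'w set \<Rightarrow> 'w set) \<Rightarrow> bool" where
  "pure_nash Part \<mu> K c v s \<longleftrightarrow>
     (\<forall>i. pure_strategy Part K i (s i)) \<and>
     (\<forall>i si'. pure_strategy Part K i si' \<longrightarrow> payoff Part \<mu> c v i (s(i := si')) \<le> payoff Part \<mu> c v i s)"

end

theory Submission
  imports Defs
begin

text \<open>
  A player's payoff is a sum over the cells of her partition, so the game is really played by
  the agents (i, C), C a cell of player i, each choosing at most K i locations in C. Against fixed
  opponents, the best replies of an agent are the greedy choices: take the locations of highest
  value \<mu> w * v i (m + 1) w, with m the number of other searchers at w, for as long as this value
  exceeds the marginal cost of one more search, which is nondecreasing by convexity of the cost.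

  Equilibria are built by raising the capacities of the agents one unit at a time, starting
  from capacity 0, where searching nothing is an equilibrium. If the agent whose capacity grows
  adds a location, every other agent at that location now faces one searcher more than it
  replied to. In the resulting near equilibria all agents best-reply to the counts with a single
  surplus searcher at r removed. An agent that stops best-replying to the true counts must hold r;
  it either drops r, which gives an equilibrium, or swaps r for a strictly better location y,
  which moves the surplus to y and strictly increases a potential. Since there are only finitely
  many profiles, this terminates.
\<close>

section \<open>Greedy choice under convex costs\<close>

lemma finite_obtain_max:
  fixes \<phi> :: "'a \<Rightarrow> 'b::linorder"
  assumes "finite S" "S \<noteq> {}"
  obtains w where "w \<in> S" "\<And>y. y \<in> S \<Longrightarrow> \<phi> y \<le> \<phi> w"
proof -
  have "Max (\<phi> ` S) \<in> \<phi> ` S" using assms by simp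
  then obtain w where "w \<in> S" "\<phi> w = Max (\<phi> ` S)" by (metis imageE)
  with assms show thesis by (intro that) auto
qed

text \<open>
  Here d k is the marginal cost of a k-th search and \<theta> a cutoff value: T consists of best
  locations of C, and card T is where the marginal cost crosses the cutoff.
\<close>

definition threshold_set :: "('w \<Rightarrow> real) \<Rightarrow> (nat \<Rightarrow> real) \<Rightarrow> nat \<Rightarrow> 'w set \<Rightarrow> 'w set \<Rightarrow> bool" where
  "threshold_set \<phi> d \<kappa> C T \<longleftrightarrow> (\<exists>\<theta>. (\<forall>x\<in>T. \<theta> \<le> \<phi> x) \<and> (\<forall>y\<in>C - T. \<phi> y \<le> \<theta>) \<and>
     (0 < card T \<longrightarrow> d (card T) \<le> \<theta>) \<and> (card T < \<kappa> \<longrightarrow> \<theta> \<le> d (Suc (card T))))"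

lemma threshold_setI:
  assumes "\<And>x. x \<in> T \<Longrightarrow> \<theta> \<le> \<phi> x" "\<And>y. y \<in> C \<Longrightarrow> y \<notin> T \<Longrightarrow> \<phi> y \<le> \<theta>"
    "0 < card T \<Longrightarrow> d (card T) \<le> \<theta>" "card T < \<kappa> \<Longrightarrow> \<theta> \<le> d (Suc (card T))"
  shows "threshold_set \<phi> d \<kappa> C T"
  unfolding threshold_set_def using assms by (intro exI[of _ \<theta>]) simp

lemma threshold_setE:
  assumes "threshold_set \<phi> d \<kappa> C T"
  obtains \<theta> where "\<And>x. x \<in> T \<Longrightarrow> \<theta> \<le> \<phi> x" "\<And>y. y \<in> C \<Longrightarrow> y \<notin> T \<Longrightarrow> \<phi> y \<le> \<theta>"
    "0 < card T \<Longrightarrow> d (card T) \<le> \<theta>" "card T < \<kappa> \<Longrightarrow> \<theta> \<le> d (Suc (card T))"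
  using assms unfolding threshold_set_def by (elim exE conjE) (rule that; simp)

lemma threshold_set_mono:
  assumes "threshold_set \<phi> d \<kappa> C T"
    and "\<And>x. x \<in> T \<Longrightarrow> \<phi> x \<le> \<psi> x" "\<And>y. y \<in> C \<Longrightarrow> y \<notin> T \<Longrightarrow> \<psi> y \<le> \<phi> y"
  shows "threshold_set \<psi> d \<kappa> C T"
proof -
  obtain \<theta> where \<theta>: "\<And>x. x \<in> T \<Longrightarrow> \<theta> \<le> \<phi> x" "\<And>y. y \<in> C \<Longrightarrow> y \<notin> T \<Longrightarrow> \<phi> y \<le> \<theta>"
    "0 < card T \<Longrightarrow> d (card T) \<le> \<theta>" "card T < \<kappa> \<Longrightarrow> \<theta> \<le> d (Suc (card T))"
    using assms(1) by (elim threshold_setE) iprover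
  show ?thesis
  proof (rule threshold_setI[of T \<theta>])
    show "\<theta> \<le> \<psi> x" if "x \<in> T" for x using \<theta>(1)[OF that] assms(2)[OF that] by linarith
    show "\<psi> y \<le> \<theta>" if "y \<in> C" "y \<notin> T" for y using \<theta>(2)[OF that] assms(3)[OF that] by linarith
  qed (use \<theta> in auto)
qed

lemma threshold_set_empty:
  assumes "finite C"
  shows "threshold_set \<phi> d 0 C {}"
  by (rule threshold_setI[where \<theta> = "Max (\<phi> ` C)"]) (simp_all add: assms)

lemma convex_minus_linear_argmin:
  fixes D d :: "nat \<Rightarrow> real"
  assumes increment: "\<And>j. 0 < j \<Longrightarrow> d j = D j - D (j - 1)"
    and convex: "mono_on {1..\<kappa>} d"
    and below: "0 < k \<Longrightarrow> d k \<le> \<theta>" and above: "k < \<kappa> \<Longrightarrow> \<theta> \<le> d (Suc k)"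
    and "k \<le> \<kappa>" "j \<le> \<kappa>"
  shows "D k - k * \<theta> \<le> D j - j * \<theta>"
proof (cases "k \<le> j")
  case True
  have "real (card {k..<j}) * \<theta> \<le> (\<Sum>l = k..<j. D (Suc l) - D l)"
  proof (rule sum_bounded_below)
    fix l assume l: "l \<in> {k..<j}"
    with \<open>j \<le> \<kappa>\<close> have "\<theta> \<le> d (Suc k)" by (intro above) auto
    also have "\<dots> \<le> d (Suc l)"
      using mono_onD[OF convex, of "Suc k" "Suc l"] l \<open>j \<le> \<kappa>\<close> by auto
    finally show "\<theta> \<le> D (Suc l) - D l" using increment[of "Suc l"] by simp
  qed
  with True show ?thesis by (simp add: sum_Suc_diff' of_nat_diff algebra_simps)
next
  case False
  have "(\<Sum>l = j..<k. D (Suc l) - D l) \<le> real (card {j..<k}) * \<theta>"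
  proof (rule sum_bounded_above)
    fix l assume l: "l \<in> {j..<k}"
    then have "d (Suc l) \<le> d k"
      using mono_onD[OF convex, of "Suc l" k] \<open>k \<le> \<kappa>\<close> by auto
    also have "\<dots> \<le> \<theta>" using below l by auto
    finally show "D (Suc l) - D l \<le> \<theta>" using increment[of "Suc l"] by simp
  qed
  with False show ?thesis by (simp add: sum_Suc_diff' of_nat_diff algebra_simps)
qed

lemma threshold_set_optimal:
  fixes D d :: "nat \<Rightarrow> real"
  assumes thr: "threshold_set \<phi> d \<kappa> C T"
    and increment: "\<And>j. 0 < j \<Longrightarrow> d j = D j - D (j - 1)" and convex: "mono_on {1..\<kappa>} d"
    and "finite C" and T: "T \<subseteq> C" "card T \<le> \<kappa>" and T': "T' \<subseteq> C" "card T' \<le> \<kappa>"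
  shows "(\<Sum>x\<in>T'. \<phi> x) - D (card T') \<le> (\<Sum>x\<in>T. \<phi> x) - D (card T)"
proof -
  obtain \<theta> where \<theta>: "\<And>x. x \<in> T \<Longrightarrow> \<theta> \<le> \<phi> x" "\<And>y. y \<in> C \<Longrightarrow> y \<notin> T \<Longrightarrow> \<phi> y \<le> \<theta>"
    "0 < card T \<Longrightarrow> d (card T) \<le> \<theta>" "card T < \<kappa> \<Longrightarrow> \<theta> \<le> d (Suc (card T))"
    using thr by (elim threshold_setE) iprover
  have fin: "finite T" "finite T'" using \<open>finite C\<close> T T' finite_subset by auto
  have "(\<Sum>x\<in>T'. \<phi> x - \<theta>) = (\<Sum>x\<in>T' \<inter> T. \<phi> x - \<theta>) + (\<Sum>x\<in>T' - T. \<phi> x - \<theta>)"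
    using fin by (simp add: sum.Int_Diff)
  also have "\<dots> \<le> (\<Sum>x\<in>T. \<phi> x - \<theta>) + 0"
  proof (rule add_mono)
    show "(\<Sum>x\<in>T' \<inter> T. \<phi> x - \<theta>) \<le> (\<Sum>x\<in>T. \<phi> x - \<theta>)"
      using fin \<theta>(1) by (intro sum_mono2) auto
    show "(\<Sum>x\<in>T' - T. \<phi> x - \<theta>) \<le> 0"
      using T' \<theta>(2) by (intro sum_nonpos) auto
  qed
  finally have "(\<Sum>x\<in>T'. \<phi> x) - card T' * \<theta> \<le> (\<Sum>x\<in>T. \<phi> x) - card T * \<theta>"
    by (simp add: sum_subtractf)
  moreover have "D (card T) - card T * \<theta> \<le> D (card T') - card T' * \<theta>"
    by (rule convex_minus_linear_argmin[OF increment convex \<theta>(3,4)]) (use T T' in auto)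
  ultimately show ?thesis by linarith
qed

lemma threshold_set_Suc:
  assumes thr: "threshold_set \<phi> d \<kappa> C T" and T: "T \<subseteq> C" "card T \<le> \<kappa>" and "finite C"
    and mono: "mono_on {1..Suc \<kappa>} d"
  shows "threshold_set \<phi> d (Suc \<kappa>) C T \<or> (\<exists>w\<in>C - T. threshold_set \<phi> d (Suc \<kappa>) C (insert w T))"
proof -
  obtain \<theta> where \<theta>: "\<And>x. x \<in> T \<Longrightarrow> \<theta> \<le> \<phi> x" "\<And>y. y \<in> C \<Longrightarrow> y \<notin> T \<Longrightarrow> \<phi> y \<le> \<theta>"
    "0 < card T \<Longrightarrow> d (card T) \<le> \<theta>" "card T < \<kappa> \<Longrightarrow> \<theta> \<le> d (Suc (card T))"
    using thr by (elim threshold_setE) iprover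
  consider "card T < \<kappa>" | "card T = \<kappa>" "\<forall>y\<in>C - T. \<phi> y \<le> d (Suc \<kappa>)"
    | "card T = \<kappa>" "\<exists>y\<in>C - T. d (Suc \<kappa>) < \<phi> y"
    using T(2) by (metis le_neq_implies_less not_le)
  then show ?thesis
  proof cases
    case 1
    then have "threshold_set \<phi> d (Suc \<kappa>) C T"
      using \<theta> by (intro threshold_setI[of T \<theta>]) auto
    then show ?thesis ..
  next
    case 2
    have "0 < \<kappa> \<Longrightarrow> d \<kappa> \<le> d (Suc \<kappa>)" by (rule mono_onD[OF mono]) auto
    with 2 have "threshold_set \<phi> d (Suc \<kappa>) C T"
      using \<theta> by (intro threshold_setI[of T "min \<theta> (d (Suc \<kappa>))"]) (auto simp: min_le_iff_disj)
    then show ?thesis ..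
  next
    case 3
    then obtain w where w: "w \<in> C - T" "\<And>y. y \<in> C - T \<Longrightarrow> \<phi> y \<le> \<phi> w"
      using finite_obtain_max[of "C - T" \<phi>] \<open>finite C\<close> by blast
    with 3 have big: "d (Suc \<kappa>) < \<phi> w" by force
    have card: "card (insert w T) = Suc \<kappa>"
      using w(1) 3 finite_subset[OF T(1) \<open>finite C\<close>] by simp
    have "threshold_set \<phi> d (Suc \<kappa>) C (insert w T)"
    proof (rule threshold_setI[of _ "\<phi> w"])
      show "\<phi> w \<le> \<phi> x" if "x \<in> insert w T" for x
        using that \<theta>(1) \<theta>(2)[of w] w(1) by force
      show "\<phi> y \<le> \<phi> w" if "y \<in> C" "y \<notin> insert w T" for y
        using that w(2) by blast
    qed (use big card in auto)
    with w(1) show ?thesis by blast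
  qed
qed

lemma threshold_set_exchange:
  assumes thr: "threshold_set \<psi> d \<kappa> C T" and T: "T \<subseteq> C" "r \<in> T" and "finite C"
    and agree: "\<And>x. x \<in> C \<Longrightarrow> x \<noteq> r \<Longrightarrow> \<phi> x = \<psi> x"
    and y: "y \<in> C - T" "\<phi> r < \<phi> y" "d (card T) \<le> \<phi> y"
  shows "\<exists>w\<in>C - T. \<phi> r < \<phi> w \<and> threshold_set \<phi> d \<kappa> C (insert w (T - {r}))"
proof -
  obtain \<theta> where \<theta>: "\<And>x. x \<in> T \<Longrightarrow> \<theta> \<le> \<psi> x" "\<And>y. y \<in> C \<Longrightarrow> y \<notin> T \<Longrightarrow> \<psi> y \<le> \<theta>"
    "0 < card T \<Longrightarrow> d (card T) \<le> \<theta>" "card T < \<kappa> \<Longrightarrow> \<theta> \<le> d (Suc (card T))"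
    using thr by (elim threshold_setE) iprover
  obtain w where w: "w \<in> C - T" "\<And>y. y \<in> C - T \<Longrightarrow> \<phi> y \<le> \<phi> w"
    using finite_obtain_max[of "C - T" \<phi>] \<open>finite C\<close> y(1) by blast
  with y have good: "\<phi> r < \<phi> w" "d (card T) \<le> \<phi> w" by force+
  have "\<phi> w \<le> \<theta>" using \<theta>(2) agree w(1) T(2) by force
  have "finite T" using T(1) \<open>finite C\<close> by (rule finite_subset)
  then have card: "card (insert w (T - {r})) = card T"
    using w(1) T(2) card_Suc_Diff1[of T r] by simp
  have "threshold_set \<phi> d \<kappa> C (insert w (T - {r}))"
  proof (rule threshold_setI[of _ "\<phi> w"])
    show "\<phi> w \<le> \<phi> x" if "x \<in> insert w (T - {r})" for x
      using that \<theta>(1) \<open>\<phi> w \<le> \<theta>\<close> agree T(1) by force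
    show "\<phi> y \<le> \<phi> w" if "y \<in> C" "y \<notin> insert w (T - {r})" for y
      using that w(2) good(1) by (cases "y = r") auto
  qed (use card good \<theta>(4) \<open>\<phi> w \<le> \<theta>\<close> in simp_all)
  with w(1) good(1) show ?thesis by blast
qed

lemma threshold_set_repair:
  assumes thr: "threshold_set \<psi> d \<kappa> C T" and not_thr: "\<not> threshold_set \<phi> d \<kappa> C T"
    and T: "T \<subseteq> C" "card T \<le> \<kappa>" "r \<in> T" and "finite C"
    and agree: "\<And>x. x \<in> C \<Longrightarrow> x \<noteq> r \<Longrightarrow> \<phi> x = \<psi> x"
    and mono: "mono_on {1..\<kappa>} d"
  shows "(\<exists>y\<in>C - T. \<phi> r < \<phi> y \<and> threshold_set \<phi> d \<kappa> C (insert y (T - {r})))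
    \<or> threshold_set \<phi> d \<kappa> C (T - {r})"
proof -
  obtain \<theta> where \<theta>: "\<And>x. x \<in> T \<Longrightarrow> \<theta> \<le> \<psi> x" "\<And>y. y \<in> C \<Longrightarrow> y \<notin> T \<Longrightarrow> \<psi> y \<le> \<theta>"
    "0 < card T \<Longrightarrow> d (card T) \<le> \<theta>" "card T < \<kappa> \<Longrightarrow> \<theta> \<le> d (Suc (card T))"
    using thr by (elim threshold_setE) iprover
  have "0 < card T" using finite_subset[OF T(1) \<open>finite C\<close>] T(3) by (auto simp: card_gt_0_iff)
  have rest_high: "\<theta> \<le> \<phi> x" if "x \<in> T - {r}" for x
    using that \<theta>(1) agree T(1) by force
  have out_low: "\<phi> y \<le> \<theta>" if "y \<in> C - T" for y
    using that \<theta>(2) agree T(3) by force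
  consider (swap) "\<exists>y\<in>C - T. \<phi> r < \<phi> y \<and> d (card T) \<le> \<phi> y"
    | (drop) "\<phi> r < d (card T)" "\<forall>y\<in>C - T. \<phi> y \<le> \<phi> r \<or> \<phi> y < d (card T)"
    | (keep) "d (card T) \<le> \<phi> r" "\<forall>y\<in>C - T. \<phi> y \<le> \<phi> r"
    by force
  then show ?thesis
  proof cases
    case swap
    then show ?thesis using threshold_set_exchange[OF thr T(1,3) \<open>finite C\<close> agree] by blast
  next
    case drop
    have "d (card T - 1) \<le> d (card T)" if "0 < card T - 1"
      using that T(2) by (intro mono_onD[OF mono]) auto
    then have "threshold_set \<phi> d \<kappa> C (T - {r})"
      using drop \<theta>(3) rest_high \<open>0 < card T\<close> T(3)
      by (intro threshold_setI[of _ "d (card T)"]) force+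
    then show ?thesis ..
  next
    case keep
    have "threshold_set \<phi> d \<kappa> C T"
    proof (rule threshold_setI[of _ "min \<theta> (\<phi> r)"])
      show "min \<theta> (\<phi> r) \<le> \<phi> x" if "x \<in> T" for x
        using that rest_high by (cases "x = r") force+
      show "\<phi> y \<le> min \<theta> (\<phi> r)" if "y \<in> C" "y \<notin> T" for y
        using that keep out_low by simp
    qed (use \<theta>(3,4) keep in auto)
    with not_thr show ?thesis by contradiction
  qed
qed

section \<open>Search games\<close>

lemma finite_ascent:
  fixes f :: "'a::finite \<Rightarrow> 'b::linorder"
  assumes "P s" and step: "\<And>s. P s \<Longrightarrow> Q \<or> (\<exists>t. P t \<and> f s < f t)"
  shows Q
  using \<open>P s\<close>
proof (induction "card {t. f s < f t}" arbitrary: s rule: less_induct)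
  case less
  show Q
  proof (rule disjE[OF step[OF less.prems]])
    assume "\<exists>t. P t \<and> f s < f t"
    then obtain t where "P t" "f s < f t" by blast
    then have "{u. f t < f u} \<subset> {u. f s < f u}" by auto
    then have "card {u. f t < f u} < card {u. f s < f u}" by (simp add: psubset_card_mono)
    then show Q using \<open>P t\<close> by (rule less.hyps)
  qed
qed

locale search_game =
  fixes Part :: "'p::finite \<Rightarrow> 'w::finite set set" and \<mu> :: "'w \<Rightarrow> real" and K :: "'p \<Rightarrow> nat"
    and c :: "'p \<Rightarrow> nat \<Rightarrow> real" and v :: "'p \<Rightarrow> nat \<Rightarrow> 'w \<Rightarrow> real"
  assumes partition: "\<And>i. partition_on UNIV (Part i)"
    and mu_nonneg: "\<And>w. \<mu> w \<ge> 0"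
    and c_convex: "\<And>i k. 1 \<le> k \<Longrightarrow> k + 1 \<le> K i \<Longrightarrow> c i (k + 1) - c i k \<ge> c i k - c i (k - 1)"
    and v_decr: "\<And>i m w. 1 \<le> m \<Longrightarrow> m + 1 \<le> card (UNIV :: 'p set) \<Longrightarrow> v i (m + 1) w \<le> v i m w"
begin

lemma Part_unique: "A \<in> Part i \<Longrightarrow> B \<in> Part i \<Longrightarrow> w \<in> A \<Longrightarrow> w \<in> B \<Longrightarrow> A = B"
  using disjointD[OF partition_onD2[OF partition]] by blast

lemma cell_eqI: "C \<in> Part i \<Longrightarrow> w \<in> C \<Longrightarrow> cell Part i w = C"
  unfolding cell_def by (rule the_equality) (auto dest: Part_unique)

lemma in_cell: "w \<in> cell Part i w"
proof -
  obtain C where "C \<in> Part i" "w \<in> C" using partition_onD1[OF partition, of i] by blast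
  then show ?thesis by (simp add: cell_eqI)
qed

definition searches :: "('p \<Rightarrow> 'w set \<Rightarrow> 'w set) \<Rightarrow> 'p \<Rightarrow> 'w \<Rightarrow> bool" where
  "searches s i w \<longleftrightarrow> w \<in> s i (cell Part i w)"

abbreviation revise :: "('p \<Rightarrow> 'w set \<Rightarrow> 'w set) \<Rightarrow> 'p \<Rightarrow> 'w set \<Rightarrow> 'w set \<Rightarrow> 'p \<Rightarrow> 'w set \<Rightarrow> 'w set" where
  "revise s i C X \<equiv> s(i := (s i)(C := X))"

lemma searches_in_cell: "C \<in> Part i \<Longrightarrow> w \<in> C \<Longrightarrow> searches s i w \<longleftrightarrow> w \<in> s i C"
  by (simp add: searches_def cell_eqI)

lemma searches_revise:
  assumes "C \<in> Part i"
  shows "searches (revise s i C X) j w \<longleftrightarrow> (if j = i \<and> w \<in> C then w \<in> X else searches s j w)"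
  using assms cell_eqI[OF assms] in_cell[of w i] by (auto simp: searches_def)

lemma searchers_split:
  "searchers Part s w = card {j. j \<noteq> i \<and> searches s j w} + of_bool (searches s i w)"
proof -
  have "{j. searches s j w} = {j. j \<noteq> i \<and> searches s j w} \<union> (if searches s i w then {i} else {})"
    by auto
  then show ?thesis unfolding searchers_def searches_def[symmetric] by (simp add: card_insert_if)
qed

lemma searchers_le_card: "searchers Part s w \<le> card (UNIV :: 'p set)"
  unfolding searchers_def by (rule card_mono) auto

lemma searchers_revise:
  assumes "C \<in> Part i" "s i C \<subseteq> C" "X \<subseteq> C"
  shows "searchers Part (revise s i C X) w + of_bool (w \<in> s i C) = searchers Part s w + of_bool (w \<in> X)"
proof -
  have "{j. j \<noteq> i \<and> searches (revise s i C X) j w} = {j. j \<noteq> i \<and> searches s j w}"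
    using searches_revise[OF assms(1)] by auto
  moreover have "searches (revise s i C X) i w \<longleftrightarrow> w \<in> X" "searches s i w \<longleftrightarrow> w \<in> s i C" if "w \<in> C"
    using that assms(1) by (simp_all add: searches_revise searches_in_cell)
  moreover have "searches (revise s i C X) i w \<longleftrightarrow> searches s i w" if "w \<notin> C"
    using that assms(1) by (simp add: searches_revise)
  ultimately show ?thesis
    using searchers_split[of "revise s i C X" w i] searchers_split[of s w i] assms(2,3)
    by (cases "w \<in> C") auto
qed

text \<open>
  The rewards v i m are only constrained for 1 \<le> m \<le> card UNIV; capping the argument keeps it
  in that range, which makes gain antitone in m everywhere.
\<close>

definition gain :: "'p \<Rightarrow> nat \<Rightarrow> 'w \<Rightarrow> real" where
  "gain i m w = \<mu> w * v i (min (card (UNIV :: 'p set)) (Suc m)) w"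

text \<open>B w is a total count of searchers at w, including i itself if i searches w.\<close>

definition virtual_value :: "('w \<Rightarrow> nat) \<Rightarrow> ('p \<Rightarrow> 'w set \<Rightarrow> 'w set) \<Rightarrow> 'p \<Rightarrow> 'w \<Rightarrow> real" where
  "virtual_value B s i w = gain i (B w - of_bool (searches s i w)) w"

abbreviation search_value :: "('p \<Rightarrow> 'w set \<Rightarrow> 'w set) \<Rightarrow> 'p \<Rightarrow> 'w \<Rightarrow> real" where
  "search_value s \<equiv> virtual_value (searchers Part s) s"

lemma v_antimono: "1 \<le> m \<Longrightarrow> m \<le> m' \<Longrightarrow> m' \<le> card (UNIV :: 'p set) \<Longrightarrow> v i m' w \<le> v i m w"
  by (rule lift_Suc_antimono_le_ivl[where N = "{1..<card (UNIV :: 'p set)}"]) (auto intro: v_decr[simplified])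

lemma gain_antimono:
  assumes "m \<le> m'"
  shows "gain i m' w \<le> gain i m w"
proof -
  have "1 \<le> card (UNIV :: 'p set)" by (simp add: Suc_le_eq finite_UNIV_card_ge_0)
  with assms show ?thesis
    unfolding gain_def by (intro mult_left_mono v_antimono) (simp_all add: mu_nonneg)
qed

lemma search_value_le_virtual_value:
  "B w \<le> searchers Part s w \<Longrightarrow> search_value s i w \<le> virtual_value B s i w"
  unfolding virtual_value_def by (rule gain_antimono) simp

lemma search_value_update_own: "search_value (s(i := si)) i = search_value s i"
proof
  fix w
  have "searches (s(i := si)) j w \<longleftrightarrow> searches s j w" if "j \<noteq> i" for j
    using that by (simp add: searches_def)
  then have "{j. j \<noteq> i \<and> searches (s(i := si)) j w} = {j. j \<noteq> i \<and> searches s j w}" by blast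
  then show "search_value (s(i := si)) i w = search_value s i w"
    unfolding virtual_value_def
    using searchers_split[of "s(i := si)" w i] searchers_split[of s w i] by simp
qed

lemma virtual_value_revise_other:
  assumes "C \<in> Part i" "C' \<in> Part j" "(j, C') \<noteq> (i, C)" "w \<in> C'"
  shows "virtual_value B (revise s i C X) j w = virtual_value B s j w"
proof -
  have "\<not> (j = i \<and> w \<in> C)" using assms Part_unique by blast
  then show ?thesis unfolding virtual_value_def by (auto simp: searches_revise[OF assms(1)])
qed

lemma search_value_searched:
  assumes "searches s i w"
  shows "search_value s i w = \<mu> w * v i (searchers Part s w) w"
proof -
  have "0 < searchers Part s w" using assms searchers_split[of s w i] by simp
  then show ?thesis
    using assms searchers_le_card[of s w] by (simp add: virtual_value_def gain_def)
qed

definition cell_cost :: "'p \<Rightarrow> 'w set \<Rightarrow> nat \<Rightarrow> real" where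
  "cell_cost i C k = (\<Sum>w\<in>C. \<mu> w) * c i k"

definition marginal_cost :: "'p \<Rightarrow> 'w set \<Rightarrow> nat \<Rightarrow> real" where
  "marginal_cost i C k = cell_cost i C k - cell_cost i C (k - 1)"

lemma marginal_cost_mono: "mono_on {1..K i} (marginal_cost i C)"
proof (rule mono_onI)
  fix a b assume "a \<in> {1..K i}" "b \<in> {1..K i}" "a \<le> b"
  moreover have "marginal_cost i C n \<le> marginal_cost i C (Suc n)" if "n \<in> {1..<K i}" for n
  proof -
    have "c i n - c i (n - 1) \<le> c i (Suc n) - c i n" using that c_convex[of n i] by simp
    then show ?thesis unfolding marginal_cost_def cell_cost_def right_diff_distrib[symmetric]
      by (intro mult_left_mono) (auto simp: mu_nonneg sum_nonneg)
  qed
  ultimately show "marginal_cost i C a \<le> marginal_cost i C b"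
    using lift_Suc_mono_le_ivl[where N = "{1..<K i}" and f = "marginal_cost i C" and n = a and n' = b]
    by auto
qed

section \<open>Existence of equilibria\<close>

definition threshold_reply ::
  "('p \<Rightarrow> 'w set \<Rightarrow> nat) \<Rightarrow> ('w \<Rightarrow> nat) \<Rightarrow> ('p \<Rightarrow> 'w set \<Rightarrow> 'w set) \<Rightarrow> 'p \<Rightarrow> 'w set \<Rightarrow> bool" where
  "threshold_reply \<kappa> B s i C \<longleftrightarrow> s i C \<subseteq> C \<and> card (s i C) \<le> \<kappa> i C \<and>
     threshold_set (virtual_value B s i) (marginal_cost i C) (\<kappa> i C) C (s i C)"

definition virtual_equilibrium ::
  "('p \<Rightarrow> 'w set \<Rightarrow> nat) \<Rightarrow> ('w \<Rightarrow> nat) \<Rightarrow> ('p \<Rightarrow> 'w set \<Rightarrow> 'w set) \<Rightarrow> bool" where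
  "virtual_equilibrium \<kappa> B s \<longleftrightarrow> (\<forall>i. \<forall>C\<in>Part i. threshold_reply \<kappa> B s i C)"

abbreviation capped_equilibrium :: "('p \<Rightarrow> 'w set \<Rightarrow> nat) \<Rightarrow> ('p \<Rightarrow> 'w set \<Rightarrow> 'w set) \<Rightarrow> bool" where
  "capped_equilibrium \<kappa> s \<equiv> virtual_equilibrium \<kappa> (searchers Part s) s"

text \<open>
  The true counts exceed the counts B that everybody replies to by one surplus searcher at r.
\<close>

definition near_equilibrium ::
  "('p \<Rightarrow> 'w set \<Rightarrow> nat) \<Rightarrow> ('w \<Rightarrow> nat) \<Rightarrow> ('p \<Rightarrow> 'w set \<Rightarrow> 'w set) \<Rightarrow> 'w \<Rightarrow> bool" where
  "near_equilibrium \<kappa> B s r \<longleftrightarrow>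
     virtual_equilibrium \<kappa> B s \<and> (\<forall>x. searchers Part s x = B x + of_bool (x = r))"

definition potential :: "('w \<Rightarrow> nat) \<Rightarrow> ('p \<Rightarrow> 'w set \<Rightarrow> 'w set) \<Rightarrow> real" where
  "potential B s = (\<Sum>i\<in>UNIV. \<Sum>x | searches s i x. gain i (B x) x)"

lemma virtual_equilibrium_revise:
  assumes C: "C \<in> Part i"
    and rest: "\<And>j C'. C' \<in> Part j \<Longrightarrow> (j, C') \<noteq> (i, C) \<Longrightarrow> threshold_reply \<kappa> B s j C'"
    and X: "X \<subseteq> C" "card X \<le> \<kappa> i C"
      "threshold_set (search_value s i) (marginal_cost i C) (\<kappa> i C) C X"
    and below: "\<And>x. B x \<le> searchers Part (revise s i C X) x"
    and exact: "\<And>x. x \<in> C \<Longrightarrow> x \<notin> X \<Longrightarrow> B x = searchers Part (revise s i C X) x"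
  shows "virtual_equilibrium \<kappa> B (revise s i C X)"
  unfolding virtual_equilibrium_def
proof (intro allI ballI)
  fix j C' assume C': "C' \<in> Part j"
  let ?t = "revise s i C X"
  show "threshold_reply \<kappa> B ?t j C'"
  proof (cases "(j, C') = (i, C)")
    case True
    have "threshold_set (virtual_value B ?t i) (marginal_cost i C) (\<kappa> i C) C X"
    proof (rule threshold_set_mono[OF X(3)])
      show "search_value s i x \<le> virtual_value B ?t i x" for x
        using search_value_le_virtual_value[of B x ?t i, OF below] by (simp add: search_value_update_own)
      show "virtual_value B ?t i y \<le> search_value s i y" if "y \<in> C" "y \<notin> X" for y
      proof -
        have "virtual_value B ?t i y = search_value ?t i y"
          by (simp add: virtual_value_def exact[OF that])
        then show ?thesis by (simp add: search_value_update_own)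
      qed
    qed
    with True X show ?thesis unfolding threshold_reply_def by simp
  next
    case False
    then have "threshold_reply \<kappa> B s j C'" using C' rest by blast
    moreover have "virtual_value B ?t j x = virtual_value B s j x" if "x \<in> C'" for x
      using virtual_value_revise_other[OF C C' False that] .
    ultimately show ?thesis
      using False unfolding threshold_reply_def by (auto elim!: threshold_set_mono)
  qed
qed

lemma near_equilibrium_revise:
  assumes C: "C \<in> Part i"
    and rest: "\<And>j C'. C' \<in> Part j \<Longrightarrow> (j, C') \<noteq> (i, C) \<Longrightarrow> threshold_reply \<kappa> B s j C'"
    and X: "X \<subseteq> C" "card X \<le> \<kappa> i C"
      "threshold_set (search_value s i) (marginal_cost i C) (\<kappa> i C) C X" "y \<in> X"
    and count: "\<And>x. searchers Part (revise s i C X) x = B x + of_bool (x = y)"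
  shows "near_equilibrium \<kappa> B (revise s i C X) y"
proof -
  have "virtual_equilibrium \<kappa> B (revise s i C X)"
    by (rule virtual_equilibrium_revise[OF C rest X(1-3)]) (use count X(4) in auto)
  with count show ?thesis unfolding near_equilibrium_def by blast
qed

lemma potential_swap:
  assumes C: "C \<in> Part i" "s i C \<subseteq> C" and r: "r \<in> s i C" and y: "y \<in> C" "y \<notin> s i C"
  shows "potential B (revise s i C (insert y (s i C - {r})))
    = potential B s + gain i (B y) y - gain i (B r) r"
proof -
  let ?t = "revise s i C (insert y (s i C - {r}))"
  define F where "F u j = (\<Sum>x | searches u j x. gain j (B x) x)" for u j
  have "{x. searches ?t i x} = insert y ({x. searches s i x} - {r})"
    using C r y by (auto simp: searches_revise searches_in_cell)
  moreover have "r \<in> {x. searches s i x}" "y \<notin> {x. searches s i x}"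
    using C r y by (auto simp: searches_in_cell)
  ultimately have "F ?t i = F s i + gain i (B y) y - gain i (B r) r"
    unfolding F_def by (simp add: sum_diff1)
  moreover have "F ?t j = F s j" if "j \<noteq> i" for j
    using that by (simp add: F_def searches_def)
  ultimately have "F ?t j = F s j + (if j = i then gain i (B y) y - gain i (B r) r else 0)" for j
    by auto
  then show ?thesis
    unfolding potential_def F_def[symmetric] by (simp add: sum.distrib)
qed

lemma near_equilibrium_swap:
  assumes near: "near_equilibrium \<kappa> B s r" and C: "C \<in> Part i" "s i C \<subseteq> C" "card (s i C) \<le> \<kappa> i C"
    and r: "r \<in> s i C" and y: "y \<in> C" "y \<notin> s i C"
    and better: "search_value s i r < search_value s i y"
    and thr: "threshold_set (search_value s i) (marginal_cost i C) (\<kappa> i C) C (insert y (s i C - {r}))"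
  shows "\<exists>t. near_equilibrium \<kappa> B t y \<and> potential B s < potential B t"
proof -
  let ?X = "insert y (s i C - {r})"
  let ?t = "revise s i C ?X"
  have replies: "\<And>j C'. C' \<in> Part j \<Longrightarrow> threshold_reply \<kappa> B s j C'"
    and count: "\<And>x. searchers Part s x = B x + of_bool (x = r)"
    using near unfolding near_equilibrium_def virtual_equilibrium_def by auto
  have count': "searchers Part ?t x = B x + of_bool (x = y)" for x
    using searchers_revise[OF C(1), of s ?X x] C(2) r y count[of x] by (cases "x = r"; cases "x = y") auto
  have "card (s i C) = Suc (card (s i C - {r}))" using card_Suc_Diff1[OF finite r] by simp
  with y have "card ?X = card (s i C)" by simp
  then have "near_equilibrium \<kappa> B ?t y"
    using C r y count' replies thr by (intro near_equilibrium_revise[OF C(1)]) auto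
  moreover have "search_value s i y = gain i (B y) y" "search_value s i r = gain i (B r) r"
    using C r y count by (auto simp: virtual_value_def searches_in_cell)
  then have "potential B s < potential B ?t"
    using potential_swap[of C i s r y B] C r y better by simp
  ultimately show ?thesis by blast
qed

lemma near_equilibrium_drop:
  assumes near: "near_equilibrium \<kappa> B s r" and C: "C \<in> Part i" "s i C \<subseteq> C" "card (s i C) \<le> \<kappa> i C"
    and r: "r \<in> s i C"
    and thr: "threshold_set (search_value s i) (marginal_cost i C) (\<kappa> i C) C (s i C - {r})"
  shows "capped_equilibrium \<kappa> (revise s i C (s i C - {r}))"
proof -
  let ?t = "revise s i C (s i C - {r})"
  have replies: "\<And>j C'. C' \<in> Part j \<Longrightarrow> threshold_reply \<kappa> B s j C'"
    and count: "\<And>x. searchers Part s x = B x + of_bool (x = r)"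
    using near unfolding near_equilibrium_def virtual_equilibrium_def by auto
  have "searchers Part ?t x = B x" for x
    using searchers_revise[OF C(1), of s "s i C - {r}" x] C(2) r count[of x] by (cases "x = r") auto
  then have count': "searchers Part ?t = B" ..
  have "card (s i C - {r}) \<le> \<kappa> i C" using C(3) card_Diff1_le[of "s i C" r] by simp
  then have "virtual_equilibrium \<kappa> B ?t"
    using C count' replies thr by (intro virtual_equilibrium_revise[OF C(1)]) auto
  with count' show ?thesis by simp
qed

lemma near_equilibrium_step:
  assumes cap: "\<And>i C. C \<in> Part i \<Longrightarrow> \<kappa> i C \<le> K i" and near: "near_equilibrium \<kappa> B s r"
  shows "(\<exists>t. capped_equilibrium \<kappa> t) \<or> (\<exists>t y. near_equilibrium \<kappa> B t y \<and> potential B s < potential B t)"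
proof (cases "capped_equilibrium \<kappa> s")
  case True
  then show ?thesis by blast
next
  case False
  then obtain i C where C: "C \<in> Part i" and not_reply: "\<not> threshold_reply \<kappa> (searchers Part s) s i C"
    unfolding virtual_equilibrium_def by blast
  have "virtual_equilibrium \<kappa> B s" and count: "\<And>x. searchers Part s x = B x + of_bool (x = r)"
    using near unfolding near_equilibrium_def by auto
  with C have T: "s i C \<subseteq> C" "card (s i C) \<le> \<kappa> i C"
    and thr: "threshold_set (virtual_value B s i) (marginal_cost i C) (\<kappa> i C) C (s i C)"
    unfolding virtual_equilibrium_def threshold_reply_def by auto
  have not_thr: "\<not> threshold_set (search_value s i) (marginal_cost i C) (\<kappa> i C) C (s i C)"
    using not_reply T unfolding threshold_reply_def by auto
  have le: "search_value s i x \<le> virtual_value B s i x" for x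
    by (rule search_value_le_virtual_value) (simp add: count)
  have agree: "search_value s i x = virtual_value B s i x" if "x \<noteq> r" for x
    using that by (simp add: virtual_value_def count)
  have r: "r \<in> s i C"
  proof (rule ccontr)
    assume "r \<notin> s i C"
    then have "threshold_set (search_value s i) (marginal_cost i C) (\<kappa> i C) C (s i C)"
      using agree le by (intro threshold_set_mono[OF thr]) force+
    with not_thr show False ..
  qed
  have mono: "mono_on {1..\<kappa> i C} (marginal_cost i C)"
    using marginal_cost_mono by (rule mono_on_subset) (use cap[OF C] in auto)
  have "(\<exists>y\<in>C - s i C. search_value s i r < search_value s i y \<and>
      threshold_set (search_value s i) (marginal_cost i C) (\<kappa> i C) C (insert y (s i C - {r})))
    \<or> threshold_set (search_value s i) (marginal_cost i C) (\<kappa> i C) C (s i C - {r})"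
    using agree by (intro threshold_set_repair[OF thr not_thr T r finite _ mono])
  then show ?thesis
    using near_equilibrium_swap[OF near C T r] near_equilibrium_drop[OF near C T r] by blast
qed

lemma near_equilibrium_solve:
  assumes cap: "\<And>i C. C \<in> Part i \<Longrightarrow> \<kappa> i C \<le> K i" and near: "near_equilibrium \<kappa> B s r"
  shows "\<exists>t. capped_equilibrium \<kappa> t"
proof (rule finite_ascent[where P = "\<lambda>s. \<exists>r. near_equilibrium \<kappa> B s r" and f = "potential B"])
  show "\<exists>r. near_equilibrium \<kappa> B s r" using near by blast
next
  fix s' assume "\<exists>r. near_equilibrium \<kappa> B s' r"
  then show "(\<exists>t. capped_equilibrium \<kappa> t) \<or>
      (\<exists>t. (\<exists>r. near_equilibrium \<kappa> B t r) \<and> potential B s' < potential B t)"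
    using near_equilibrium_step[of \<kappa>, OF cap] by blast
qed

lemma capped_equilibrium_Suc:
  assumes cap: "\<And>i C. C \<in> Part i \<Longrightarrow> \<kappa> i C \<le> K i" and eq: "capped_equilibrium \<kappa> s"
    and C: "C \<in> Part i" and room: "\<kappa> i C < K i"
  shows "\<exists>t. capped_equilibrium (\<kappa>(i := (\<kappa> i)(C := Suc (\<kappa> i C)))) t"
proof -
  define \<kappa>' where "\<kappa>' = \<kappa>(i := (\<kappa> i)(C := Suc (\<kappa> i C)))"
  have cap': "\<And>j C'. C' \<in> Part j \<Longrightarrow> \<kappa>' j C' \<le> K j" using cap room by (auto simp: \<kappa>'_def)
  have replies: "\<And>j C'. C' \<in> Part j \<Longrightarrow> threshold_reply \<kappa> (searchers Part s) s j C'"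
    using eq unfolding virtual_equilibrium_def by blast
  have rest: "threshold_reply \<kappa>' (searchers Part s) s j C'" if "C' \<in> Part j" "(j, C') \<noteq> (i, C)" for j C'
    using replies[OF that(1)] that(2) by (auto simp: \<kappa>'_def threshold_reply_def)
  have T: "s i C \<subseteq> C" "card (s i C) \<le> \<kappa> i C"
    and thr: "threshold_set (search_value s i) (marginal_cost i C) (\<kappa> i C) C (s i C)"
    using replies[OF C] unfolding threshold_reply_def by auto
  have mono: "mono_on {1..Suc (\<kappa> i C)} (marginal_cost i C)"
    using marginal_cost_mono by (rule mono_on_subset) (use room in auto)
  from threshold_set_Suc[OF thr T finite mono]
  show ?thesis
  proof (elim disjE bexE)
    assume "threshold_set (search_value s i) (marginal_cost i C) (Suc (\<kappa> i C)) C (s i C)"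
    with T have "threshold_reply \<kappa>' (searchers Part s) s i C"
      unfolding threshold_reply_def \<kappa>'_def by simp
    with rest have "capped_equilibrium \<kappa>' s"
      unfolding virtual_equilibrium_def by blast
    then show ?thesis unfolding \<kappa>'_def by blast
  next
    fix w assume w: "w \<in> C - s i C"
      and thr': "threshold_set (search_value s i) (marginal_cost i C) (Suc (\<kappa> i C)) C (insert w (s i C))"
    let ?t = "revise s i C (insert w (s i C))"
    have "searchers Part ?t x = searchers Part s x + of_bool (x = w)" for x
      using searchers_revise[OF C, of s "insert w (s i C)" x] T(1) w by auto
    moreover have "card (insert w (s i C)) \<le> \<kappa>' i C" using w T(2) by (simp add: \<kappa>'_def)
    ultimately have "near_equilibrium \<kappa>' (searchers Part s) ?t w"
      using T(1) w rest thr' by (intro near_equilibrium_revise[OF C]) (auto simp: \<kappa>'_def)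
    then show ?thesis using near_equilibrium_solve[of \<kappa>', OF cap'] unfolding \<kappa>'_def by blast
  qed
qed

lemma capped_equilibrium_exists:
  assumes "\<And>i C. C \<in> Part i \<Longrightarrow> \<kappa> i C \<le> K i"
  shows "\<exists>s. capped_equilibrium \<kappa> s"
  using assms
proof (induction "\<Sum>(i, C)\<in>Sigma UNIV Part. \<kappa> i C" arbitrary: \<kappa> rule: less_induct)
  case less
  show ?case
  proof (cases "\<exists>i. \<exists>C\<in>Part i. 0 < \<kappa> i C")
    case False
    then have "capped_equilibrium \<kappa> (\<lambda>_ _. {})"
      by (auto simp: virtual_equilibrium_def threshold_reply_def threshold_set_empty)
    then show ?thesis by blast
  next
    case True
    then obtain i C where C: "C \<in> Part i" "0 < \<kappa> i C" by blast
    define \<kappa>' where "\<kappa>' = \<kappa>(i := (\<kappa> i)(C := \<kappa> i C - 1))"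
    have cap': "\<kappa>' j C' \<le> K j" if "C' \<in> Part j" for j C'
      using less.prems[OF that] by (auto simp: \<kappa>'_def)
    have "(\<Sum>(j, C')\<in>Sigma UNIV Part. \<kappa>' j C') < (\<Sum>(j, C')\<in>Sigma UNIV Part. \<kappa> j C')"
      by (rule sum_strict_mono_ex1) (use C in \<open>auto simp: \<kappa>'_def\<close>)
    then obtain s where "capped_equilibrium \<kappa>' s" using less.hyps cap' by blast
    moreover have "\<kappa>' i C < K i" using C less.prems[OF C(1)] by (simp add: \<kappa>'_def)
    ultimately obtain t where "capped_equilibrium (\<kappa>'(i := (\<kappa>' i)(C := Suc (\<kappa>' i C)))) t"
      using capped_equilibrium_Suc[of \<kappa>', OF cap' _ C(1)] by blast
    moreover have "\<kappa>'(i := (\<kappa>' i)(C := Suc (\<kappa>' i C))) = \<kappa>"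
      using C(2) by (auto simp: \<kappa>'_def)
    ultimately show ?thesis by auto
  qed
qed

lemma sum_over_Part: "(\<Sum>w\<in>UNIV. f w) = (\<Sum>C\<in>Part i. \<Sum>w\<in>C. f w)"
proof -
  have "(\<Sum>w\<in>\<Union>(Part i). f w) = (\<Sum>C\<in>Part i. \<Sum>w\<in>C. f w)"
    using partition_onD2[OF partition, of i] by (simp add: sum.Union_disjoint disjoint_def)
  then show ?thesis using partition_onD1[OF partition, of i] by simp
qed

lemma payoff_by_cells:
  assumes sub: "\<And>C. C \<in> Part i \<Longrightarrow> s i C \<subseteq> C"
  shows "payoff Part \<mu> c v i s = (\<Sum>C\<in>Part i. (\<Sum>w\<in>s i C. search_value s i w) - cell_cost i C (card (s i C)))"
proof -
  have cell: "(\<Sum>w\<in>C. \<mu> w * ((if w \<in> s i (cell Part i w) then v i (searchers Part s w) w else 0)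
      - c i (card (s i (cell Part i w)))))
    = (\<Sum>w\<in>s i C. search_value s i w) - cell_cost i C (card (s i C))" if C: "C \<in> Part i" for C
  proof -
    have "(\<Sum>w\<in>C. \<mu> w * ((if w \<in> s i (cell Part i w) then v i (searchers Part s w) w else 0)
        - c i (card (s i (cell Part i w)))))
      = (\<Sum>w\<in>C. (if w \<in> s i C then search_value s i w else 0) - \<mu> w * c i (card (s i C)))"
      using C by (intro sum.cong) (auto simp: cell_eqI search_value_searched searches_in_cell right_diff_distrib)
    also have "\<dots> = (\<Sum>w\<in>s i C. search_value s i w) - cell_cost i C (card (s i C))"
      using sub[OF C]
      by (simp add: sum_subtractf sum.If_cases Int_absorb1 cell_cost_def sum_distrib_right)
    finally show ?thesis .
  qed
  show ?thesis unfolding payoff_def sum_over_Part[of _ i] by (rule sum.cong) (simp_all add: cell)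
qed

lemma capped_equilibrium_pure_nash:
  assumes eq: "capped_equilibrium (\<lambda>i C. K i) s"
  shows "pure_nash Part \<mu> K c v s"
proof -
  have reply: "s i C \<subseteq> C" "card (s i C) \<le> K i"
    "threshold_set (search_value s i) (marginal_cost i C) (K i) C (s i C)" if "C \<in> Part i" for i C
    using eq that unfolding virtual_equilibrium_def threshold_reply_def by auto
  have "payoff Part \<mu> c v i (s(i := si)) \<le> payoff Part \<mu> c v i s"
    if si: "pure_strategy Part K i si" for i si
  proof -
    have "payoff Part \<mu> c v i (s(i := si))
        = (\<Sum>C\<in>Part i. (\<Sum>w\<in>si C. search_value s i w) - cell_cost i C (card (si C)))"
      using si by (subst payoff_by_cells) (auto simp: pure_strategy_def search_value_update_own)
    also have "\<dots> \<le> (\<Sum>C\<in>Part i. (\<Sum>w\<in>s i C. search_value s i w) - cell_cost i C (card (s i C)))"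
    proof (rule sum_mono)
      fix C assume C: "C \<in> Part i"
      show "(\<Sum>w\<in>si C. search_value s i w) - cell_cost i C (card (si C))
          \<le> (\<Sum>w\<in>s i C. search_value s i w) - cell_cost i C (card (s i C))"
        using si C reply[OF C] marginal_cost_mono
        by (intro threshold_set_optimal[where D = "cell_cost i C" and d = "marginal_cost i C"])
          (auto simp: pure_strategy_def marginal_cost_def)
    qed
    also have "\<dots> = payoff Part \<mu> c v i s" using reply by (simp add: payoff_by_cells)
    finally show ?thesis .
  qed
  with reply show ?thesis unfolding pure_nash_def pure_strategy_def by blast
qed

end

theorem corollary1:
  fixes Part :: "'p::finite \<Rightarrow> 'w::finite set set"
    and \<mu> :: "'w \<Rightarrow> real"
    and K :: "'p \<Rightarrow> nat"
    and c :: "'p \<Rightarrow> nat \<Rightarrow> real"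
    and v :: "'p \<Rightarrow> nat \<Rightarrow> 'w \<Rightarrow> real"
    and vs :: "'w \<Rightarrow> real"
  assumes part: "\<And>i. partition_on UNIV (Part i)"
    and mu_nonneg: "\<And>w. \<mu> w \<ge> 0"
    and mu_sum: "(\<Sum>w\<in>UNIV. \<mu> w) = 1"
    and mu_cell: "\<And>i C. C \<in> Part i \<Longrightarrow> (\<Sum>w\<in>C. \<mu> w) > 0"
    and c0: "\<And>i. c i 0 = 0"
    and c_nonneg: "\<And>i k. k \<le> K i \<Longrightarrow> c i k \<ge> 0"
    and c_convex: "\<And>i k. 1 \<le> k \<Longrightarrow> k + 1 \<le> K i \<Longrightarrow>
                      c i (k + 1) - c i k \<ge> c i k - c i (k - 1)"
    and v_nonneg: "\<And>i m w. 1 \<le> m \<Longrightarrow> m \<le> card (UNIV :: 'p set) \<Longrightarrow> v i m w \<ge> 0"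
    and v_decr: "\<And>i m w. 1 \<le> m \<Longrightarrow> m + 1 \<le> card (UNIV :: 'p set) \<Longrightarrow> v i (m + 1) w \<le> v i m w"
    and vs_nonneg: "\<And>w. vs w \<ge> 0"
  shows "\<exists>s. pure_nash Part \<mu> K c v s"
proof -
  interpret search_game Part \<mu> K c v
    using part mu_nonneg c_convex v_decr by unfold_locales
  obtain s where "capped_equilibrium (\<lambda>i C. K i) s"
    using capped_equilibrium_exists[of "\<lambda>i C. K i"] by blast
  then show ?thesis by (blast intro: capped_equilibrium_pure_nash)
qed

end
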